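(* Let $S$ be a semiring and let $\mathcal{A}=(A,X,Y,\sigma^A,\mu^A)$ be a sequential weighted automaton over $S$. Then there exists a Moore-type weighted automaton $\mathcal{B}=(B,X,Y,\sigma^B,\delta^B,\omega^B)$ over $S$ such that $[\![\mathcal{A}]\!]=[\![\mathcal{B}]\!]_{1n}$. Moreover, $\mathcal{B}$ can be chosen with $|B|\le |A|\cdot|Y|$.
   Context: A semiring $(S,+,\cdot,0,1)$ is a set with $(S,+,0)$ a commutative monoid, $(S,\cdot,1)$ a monoid (not necessarily commutative), $\cdot$ distributing over $+$ on both sides, and $0\cdot s=s\cdot 0=0$. $(X\times Y)^*$ is identified with the set of pairs $(u,v)\in X^*\times Y^*$ with $|u|=|v|$; its empty element is $(\varepsilon,\varepsilon)$. All automata have finite nonempty state set and finite nonempty alphabets $X,Y$. A sequential weighted automaton over $S$ is $\mathcal{A}=(A,X,Y,\sigma,\mu)$ with $\sigma:A\to S$ and $\mu:A\times X\times Y\times A\to S$. Its behavior $[\![\mathcal{A}]\!]:(X\times Y)^*\to S$ is $[\![\mathcal{A}]\!](\varepsilon,\varepsilon)=\sum_{a\in A}\sigma(a)$ and, for $u=x_1\cdots x_n$, $v=y_1\cdots y_n$ ($n\ge1$), $[\![\mathcal{A}]\!](u,v)=\sum_{(a_0,\dots,a_n)\in A^{n+1}}\sigma(a_0)\cdot\mu(a_0,x_1,y_1,a_1)\cdots\mu(a_{n-1},x_n,y_n,a_n)$. A Moore-type weighted automaton over $S$ is $\mathcal{B}=(B,X,Y,\sigma,\delta,\omega)$ with $\sigma:B\to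 S$, $\delta:B\times X\times B\to S$, $\omega:B\times Y\to S$; write $\delta_x(b,c)=\delta(b,x,c)$, $\omega_y(b)=\omega(b,y)$. Its $1n$-behavior is $[\![\mathcal{B}]\!]_{1n}(\varepsilon,\varepsilon)=\sum_{b\in B}\sigma(b)$ and, for $u=x_1\cdots x_n$, $v=y_1\cdots y_n$ with $n\ge1$, $[\![\mathcal{B}]\!]_{1n}(u,v)=\sum_{(b_0,\dots,b_n)\in B^{n+1}}\sigma(b_0)\cdot\delta_{x_1}(b_0,b_1)\cdot\omega_{y_1}(b_1)\cdots\delta_{x_n}(b_{n-1},b_n)\cdot\omega_{y_n}(b_n)$. *)

theory Defs
  imports Main
begin

text \<open>A semiring in the sense of the paper: commutative additive monoid, multiplicative
monoid (not necessarily commutative), two-sided distributivity, 0 annihilating.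
In Isabelle this is the class combination semiring_0 + monoid_mult (no 0 \<noteq> 1 required).\<close>

definition state_seqs :: "'q set \<Rightarrow> nat \<Rightarrow> 'q list set" where
  "state_seqs Q n = {qs. set qs \<subseteq> Q \<and> length qs = Suc n}"

definition seq_behavior ::
  "'a set \<Rightarrow> ('a \<Rightarrow> 's::{semiring_0,monoid_mult}) \<Rightarrow> ('a \<Rightarrow> 'x \<Rightarrow> 'y \<Rightarrow> 'a \<Rightarrow> 's)
    \<Rightarrow> 'x list \<Rightarrow> 'y list \<Rightarrow> 's" where
  "seq_behavior A \<sigma> \<mu> u v =
     (\<Sum>as\<in>state_seqs A (length u).
        \<sigma> (as ! 0) * prod_list (map (\<lambda>i. \<mu> (as ! i) (u ! i) (v ! i) (as ! Suc i)) [0..<length u]))"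

definition moore_behavior_1n ::
  "'b set \<Rightarrow> ('b \<Rightarrow> 's::{semiring_0,monoid_mult}) \<Rightarrow> ('b \<Rightarrow> 'x \<Rightarrow> 'b \<Rightarrow> 's) \<Rightarrow> ('b \<Rightarrow> 'y \<Rightarrow> 's)
    \<Rightarrow> 'x list \<Rightarrow> 'y list \<Rightarrow> 's" where
  "moore_behavior_1n B \<sigma> \<delta> \<omega> u v =
     (\<Sum>bs\<in>state_seqs B (length u).
        \<sigma> (bs ! 0) * prod_list (map (\<lambda>i. \<delta> (bs ! i) (u ! i) (bs ! Suc i) * \<omega> (bs ! Suc i) (v ! i))
                                     [0..<length u]))"

end

theory Submission
  imports Defs
begin

text \<open>The Moore automaton runs on \<open>A \<times> Y\<close>: its state \<open>(a, y)\<close> remembers the output \<open>y\<close>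
of the transition of the sequential automaton that entered \<open>a\<close>, so the output weight of a
state is just the indicator of its second component. Only runs whose output trace is
\<open>y\<^sub>0 # v\<close> (for a fixed dummy \<open>y\<^sub>0\<close> at the initial state) have nonzero weight, and projecting
them to \<open>A\<close> is a weight-preserving bijection onto the runs of the sequential automaton.\<close>

lemma prod_list_eq_zero_if_zero_mem:
  fixes xs :: "'s::{monoid_mult,mult_zero} list"
  shows "0 \<in> set xs \<Longrightarrow> prod_list xs = 0"
  by (induction xs) auto

definition seq_run_weight ::
  "('a \<Rightarrow> 's::{semiring_0,monoid_mult}) \<Rightarrow> ('a \<Rightarrow> 'x \<Rightarrow> 'y \<Rightarrow> 'a \<Rightarrow> 's)
    \<Rightarrow> 'x list \<Rightarrow> 'y list \<Rightarrow> 'a list \<Rightarrow> 's" where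
  "seq_run_weight \<sigma> \<mu> u v as =
     \<sigma> (as ! 0) * prod_list (map (\<lambda>i. \<mu> (as ! i) (u ! i) (v ! i) (as ! Suc i)) [0..<length u])"

definition moore_run_weight ::
  "('b \<Rightarrow> 's::{semiring_0,monoid_mult}) \<Rightarrow> ('b \<Rightarrow> 'x \<Rightarrow> 'b \<Rightarrow> 's) \<Rightarrow> ('b \<Rightarrow> 'y \<Rightarrow> 's)
    \<Rightarrow> 'x list \<Rightarrow> 'y list \<Rightarrow> 'b list \<Rightarrow> 's" where
  "moore_run_weight \<sigma> \<delta> \<omega> u v bs =
     \<sigma> (bs ! 0) * prod_list (map (\<lambda>i. \<delta> (bs ! i) (u ! i) (bs ! Suc i) * \<omega> (bs ! Suc i) (v ! i))
                                  [0..<length u])"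

lemma seq_behavior_eq_sum_run_weight:
  "seq_behavior A \<sigma> \<mu> u v = (\<Sum>as\<in>state_seqs A (length u). seq_run_weight \<sigma> \<mu> u v as)"
  by (simp add: seq_behavior_def seq_run_weight_def)

lemma moore_behavior_1n_eq_sum_run_weight:
  "moore_behavior_1n B \<sigma> \<delta> \<omega> u v = (\<Sum>bs\<in>state_seqs B (length u). moore_run_weight \<sigma> \<delta> \<omega> u v bs)"
  by (simp add: moore_behavior_1n_def moore_run_weight_def)

definition moore_sim_init :: "'y \<Rightarrow> ('a \<Rightarrow> 's::zero) \<Rightarrow> 'a \<times> 'y \<Rightarrow> 's" where
  "moore_sim_init y\<^sub>0 \<sigma> = (\<lambda>(a, y). if y = y\<^sub>0 then \<sigma> a else 0)"

definition moore_sim_trans :: "('a \<Rightarrow> 'x \<Rightarrow> 'y \<Rightarrow> 'a \<Rightarrow> 's) \<Rightarrow> 'a \<times> 'y \<Rightarrow> 'x \<Rightarrow> 'a \<times> 'y \<Rightarrow> 's" where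
  "moore_sim_trans \<mu> b x b' = \<mu> (fst b) x (snd b') (fst b')"

definition moore_sim_out :: "'a \<times> 'y \<Rightarrow> 'y \<Rightarrow> 's::{zero,one}" where
  "moore_sim_out b y = (if y = snd b then 1 else 0)"

lemma map_snd_neq_Cons_nth:
  assumes "length bs = Suc (length v)" "map snd bs \<noteq> y\<^sub>0 # v"
  shows "snd (bs ! 0) \<noteq> y\<^sub>0 \<or> (\<exists>i<length v. snd (bs ! Suc i) \<noteq> v ! i)"
  using assms by (auto simp: list_eq_iff_nth_eq less_Suc_eq_0_disj)

lemma moore_sim_run_weight:
  assumes len_bs: "length bs = Suc (length u)" and len_v: "length v = length u"
  shows "moore_run_weight (moore_sim_init y\<^sub>0 \<sigma>) (moore_sim_trans \<mu>) moore_sim_out u v bs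
       = (if map snd bs = y\<^sub>0 # v then seq_run_weight \<sigma> \<mu> u v (map fst bs) else 0)"
proof (cases "map snd bs = y\<^sub>0 # v")
  case True
  then have init: "snd (bs ! 0) = y\<^sub>0" and trace: "\<And>i. i < length u \<Longrightarrow> snd (bs ! Suc i) = v ! i"
    using len_bs by (metis nth_Cons_0 nth_map zero_less_Suc, metis Suc_mono nth_Cons_Suc nth_map)
  have factors: "map (\<lambda>i. moore_sim_trans \<mu> (bs ! i) (u ! i) (bs ! Suc i) * moore_sim_out (bs ! Suc i) (v ! i))
          [0..<length u]
      = map (\<lambda>i. \<mu> (map fst bs ! i) (u ! i) (v ! i) (map fst bs ! Suc i)) [0..<length u]"
    using len_bs trace by (simp add: moore_sim_trans_def moore_sim_out_def)
  show ?thesis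
    unfolding moore_run_weight_def seq_run_weight_def factors
    using True init len_bs by (simp add: moore_sim_init_def case_prod_beta)
next
  case False
  then consider "snd (bs ! 0) \<noteq> y\<^sub>0" | i where "i < length u" "snd (bs ! Suc i) \<noteq> v ! i"
    using map_snd_neq_Cons_nth[of bs v y\<^sub>0] len_bs len_v by auto
  then have "moore_run_weight (moore_sim_init y\<^sub>0 \<sigma>) (moore_sim_trans \<mu>) moore_sim_out u v bs = 0"
  proof cases
    case 1
    then show ?thesis by (simp add: moore_run_weight_def moore_sim_init_def case_prod_beta)
  next
    case 2
    then have "0 \<in> set (map (\<lambda>i. moore_sim_trans \<mu> (bs ! i) (u ! i) (bs ! Suc i)
                                  * moore_sim_out (bs ! Suc i) (v ! i)) [0..<length u])"
      by (force simp: moore_sim_out_def)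
    then show ?thesis
      by (simp add: moore_run_weight_def prod_list_eq_zero_if_zero_mem)
  qed
  with False show ?thesis by simp
qed

lemma bij_betw_map_fst_state_seqs:
  assumes "set w \<subseteq> Y" "length w = Suc n"
  shows "bij_betw (map fst) {bs \<in> state_seqs (A \<times> Y) n. map snd bs = w} (state_seqs A n)"
proof (rule bij_betw_byWitness[where f' = "\<lambda>as. zip as w"])
  show "\<forall>bs\<in>{bs \<in> state_seqs (A \<times> Y) n. map snd bs = w}. zip (map fst bs) w = bs"
    by (metis (mono_tags, lifting) mem_Collect_eq zip_map_fst_snd)
  show "\<forall>as\<in>state_seqs A n. map fst (zip as w) = as"
    using assms by (simp add: state_seqs_def)
  show "map fst ` {bs \<in> state_seqs (A \<times> Y) n. map snd bs = w} \<subseteq> state_seqs A n"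
    by (auto simp: state_seqs_def subset_iff mem_Times_iff)
  show "(\<lambda>as. zip as w) ` state_seqs A n \<subseteq> {bs \<in> state_seqs (A \<times> Y) n. map snd bs = w}"
    using assms by (auto simp: state_seqs_def dest: set_zip_leftD set_zip_rightD)
qed

lemma finite_state_seqs: "finite Q \<Longrightarrow> finite (state_seqs Q n)"
  unfolding state_seqs_def by (rule finite_lists_length_eq)

theorem seq_behavior_eq_moore_sim:
  assumes "finite A" "finite Y" "y\<^sub>0 \<in> Y" "set v \<subseteq> Y" "length v = length u"
  shows "seq_behavior A \<sigma> \<mu> u v
       = moore_behavior_1n (A \<times> Y) (moore_sim_init y\<^sub>0 \<sigma>) (moore_sim_trans \<mu>) moore_sim_out u v"
proof -
  let ?n = "length u" and ?T = "{bs \<in> state_seqs (A \<times> Y) (length u). map snd bs = y\<^sub>0 # v}"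
  have "moore_behavior_1n (A \<times> Y) (moore_sim_init y\<^sub>0 \<sigma>) (moore_sim_trans \<mu>) moore_sim_out u v
      = (\<Sum>bs\<in>state_seqs (A \<times> Y) ?n.
           if map snd bs = y\<^sub>0 # v then seq_run_weight \<sigma> \<mu> u v (map fst bs) else 0)"
    unfolding moore_behavior_1n_eq_sum_run_weight using assms(5)
    by (intro sum.cong refl) (simp add: moore_sim_run_weight state_seqs_def)
  also have "\<dots> = (\<Sum>bs\<in>?T. seq_run_weight \<sigma> \<mu> u v (map fst bs))"
    using assms(1,2) by (simp add: sum.inter_filter finite_state_seqs)
  also have "\<dots> = (\<Sum>as\<in>state_seqs A ?n. seq_run_weight \<sigma> \<mu> u v as)"
    using assms(3-5) by (intro sum.reindex_bij_betw bij_betw_map_fst_state_seqs) auto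
  finally show ?thesis by (simp add: seq_behavior_eq_sum_run_weight)
qed

theorem theorem3:
  fixes A :: "'a set" and X :: "'x set" and Y :: "'y set"
    and \<sigma>A :: "'a \<Rightarrow> 's::{semiring_0,monoid_mult}"
    and \<mu>A :: "'a \<Rightarrow> 'x \<Rightarrow> 'y \<Rightarrow> 'a \<Rightarrow> 's"
  assumes "finite A" "A \<noteq> {}" "finite X" "X \<noteq> {}" "finite Y" "Y \<noteq> {}"
  shows "\<exists>(B :: ('a \<times> 'y) set) \<sigma>B \<delta>B \<omega>B.
           finite B \<and> B \<noteq> {} \<and> card B \<le> card A * card Y \<and>
           (\<forall>u v. set u \<subseteq> X \<longrightarrow> set v \<subseteq> Y \<longrightarrow> length u = length v \<longrightarrow>
              seq_behavior A \<sigma>A \<mu>A u v = moore_behavior_1n B \<sigma>B \<delta>B \<omega>B u v)"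
proof -
  obtain y\<^sub>0 where "y\<^sub>0 \<in> Y" using assms(6) by blast
  then have "\<forall>u v. set u \<subseteq> X \<longrightarrow> set v \<subseteq> Y \<longrightarrow> length u = length v \<longrightarrow>
      seq_behavior A \<sigma>A \<mu>A u v
      = moore_behavior_1n (A \<times> Y) (moore_sim_init y\<^sub>0 \<sigma>A) (moore_sim_trans \<mu>A) moore_sim_out u v"
    using assms by (auto intro: seq_behavior_eq_moore_sim)
  with assms show ?thesis
    by (intro exI[of _ "A \<times> Y"] exI[of _ "moore_sim_init y\<^sub>0 \<sigma>A"] exI[of _ "moore_sim_trans \<mu>A"]
        exI[of _ moore_sim_out]) (simp add: card_cartesian_product)
qed

end
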